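(* Let $\mathcal{T}=(V,\mathsf{p})$ and $\tilde{\mathcal{T}}=(V,\tilde{\mathsf{p}})$ be directed forests on the same vertex set such that $\mathcal{T}$ is thinner than $\tilde{\mathcal{T}}$. Then for every $k\in\mathbb{N}$, the $k$-th power $\mathcal{T}^k$ is thinner than $\tilde{\mathcal{T}}^k$.
   Context: A directed forest is a pair $\mathcal{T}=(V,\mathsf{p})$ where $V$ is a nonempty set and $\mathsf{p}\colon V\to V$ satisfies: if $n\in\mathbb{N}$, $v\in V$ and $\mathsf{p}^n(v)=v$, then $\mathsf{p}(v)=v$. Roots: $\mathrm{root}(\mathcal{T})=\{v:\mathsf{p}(v)=v\}$. $\mathcal{T}_1=(V,\mathsf{p}_1)$ is thinner than $\mathcal{T}_2=(V,\mathsf{p}_2)$ if $\mathsf{p}_1(v)\in\{v,\mathsf{p}_2(v)\}$ for all $v\in V$. For $k\in\mathbb{N}$ the $k$-th power of $\mathcal{T}=(V,\mathsf{p})$ is $\mathcal{T}^k=(V,\mathsf{p}^{[k]})$, where $\mathsf{p}^{[k]}(v)=\mathsf{p}^k(v)$ if $\mathsf{p}^{k-1}(v)\notin\mathrm{root}(\mathcal{T})$ and $\mathsf{p}^{[k]}(v)=v$ if $\mathsf{p}^{k-1}(v)\in\mathrm{root}(\mathcal{T})$ (here $\mathsf{p}^0=\mathrm{id}_V$); $\mathcal{T}^k$ is a directed forest. *)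

theory Defs
  imports Main
begin

text \<open>The natural numbers n are taken positive (n = 0 would force p to be the identity).\<close>
definition directed_forest :: "'a set \<Rightarrow> ('a \<Rightarrow> 'a) \<Rightarrow> bool" where
  "directed_forest V p \<longleftrightarrow> V \<noteq> {} \<and> (\<forall>v\<in>V. p v \<in> V) \<and>
     (\<forall>n::nat. \<forall>v\<in>V. n \<ge> 1 \<and> (p ^^ n) v = v \<longrightarrow> p v = v)"

definition forest_roots :: "'a set \<Rightarrow> ('a \<Rightarrow> 'a) \<Rightarrow> 'a set" where
  "forest_roots V p = {v\<in>V. p v = v}"

definition thinner :: "'a set \<Rightarrow> ('a \<Rightarrow> 'a) \<Rightarrow> ('a \<Rightarrow> 'a) \<Rightarrow> bool" where
  "thinner V p1 p2 \<longleftrightarrow> (\<forall>v\<in>V. p1 v \<in> {v, p2 v})"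

definition forest_power :: "'a set \<Rightarrow> ('a \<Rightarrow> 'a) \<Rightarrow> nat \<Rightarrow> 'a \<Rightarrow> 'a" where
  "forest_power V p k v = (if (p ^^ (k - 1)) v \<in> forest_roots V p then v else (p ^^ k) v)"

end

theory Submission
  imports Defs
begin

(* If the (k-1)-st p-ancestor of v is not a p-root, then no earlier ancestor is one either,
   since roots are fixed by p. Along this whole path p moves every vertex, so thinness
   forces p and pt to agree there; hence p^k v = pt^k v and the (k-1)-st pt-ancestor is not
   a pt-root, i.e. both powers send v to the same vertex. Otherwise the p-power fixes v. *)

lemma funpow_closed:
  assumes "\<And>u. u \<in> V \<Longrightarrow> p u \<in> V" and "v \<in> V"
  shows "(p ^^ n) v \<in> V"
  using assms by (induction n) auto

lemma funpow_fixed_point_stable: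
  assumes "p ((p ^^ j) v) = (p ^^ j) v" and "j \<le> i"
  shows "(p ^^ i) v = (p ^^ j) v"
proof -
  have "(p ^^ (j + m)) v = (p ^^ j) v" for m
    using assms(1) by (induction m) auto
  then show ?thesis
    using assms(2) le_Suc_ex by blast
qed

lemma funpow_moving_before:
  assumes "p ((p ^^ i) v) \<noteq> (p ^^ i) v" and "j \<le> i"
  shows "p ((p ^^ j) v) \<noteq> (p ^^ j) v"
  using assms funpow_fixed_point_stable[of p j v i] by auto

lemma funpow_eq_if_agree_on_orbit:
  assumes "\<And>j. j < n \<Longrightarrow> p ((p ^^ j) v) = q ((p ^^ j) v)"
  shows "(p ^^ n) v = (q ^^ n) v"
  using assms
proof (induction n)
  case (Suc n)
  have "(p ^^ n) v = (q ^^ n) v"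
    using Suc.IH Suc.prems less_SucI by blast
  moreover have "p ((p ^^ n) v) = q ((p ^^ n) v)"
    using Suc.prems lessI by blast
  ultimately show ?case by simp
qed simp

lemma thinner_funpow_eq:
  assumes "thinner V p pt" and "\<And>u. u \<in> V \<Longrightarrow> p u \<in> V" and "v \<in> V"
    and "p ((p ^^ n) v) \<noteq> (p ^^ n) v" and "j \<le> Suc n"
  shows "(p ^^ j) v = (pt ^^ j) v"
proof (rule funpow_eq_if_agree_on_orbit)
  fix i assume "i < j"
  then have "p ((p ^^ i) v) \<noteq> (p ^^ i) v"
    using assms(4,5) funpow_moving_before[of p n v i] by simp
  moreover have "(p ^^ i) v \<in> V"
    using assms(2,3) by (rule funpow_closed)
  then have "p ((p ^^ i) v) \<in> {(p ^^ i) v, pt ((p ^^ i) v)}"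
    using assms(1) unfolding thinner_def by blast
  ultimately show "p ((p ^^ i) v) = pt ((p ^^ i) v)" by blast
qed

theorem proposition4p2:
  fixes V :: "'a set" and p pt :: "'a \<Rightarrow> 'a" and k :: nat
  assumes "directed_forest V p" and "directed_forest V pt"
    and "thinner V p pt"
    and "k \<ge> 1"
  shows "thinner V (forest_power V p k) (forest_power V pt k)"
  unfolding thinner_def
proof
  fix v assume v: "v \<in> V"
  obtain n where k: "k = Suc n" using assms(4) not0_implies_Suc by force
  have closed: "\<And>u. u \<in> V \<Longrightarrow> p u \<in> V"
    using assms(1) unfolding directed_forest_def by blast
  show "forest_power V p k v \<in> {v, forest_power V pt k v}"
  proof (cases "(p ^^ n) v \<in> forest_roots V p")
    case True
    then show ?thesis by (simp add: forest_power_def k)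
  next
    case False
    then have moving: "p ((p ^^ n) v) \<noteq> (p ^^ n) v"
      using funpow_closed[OF closed v] by (simp add: forest_roots_def)
    note agree = thinner_funpow_eq[OF assms(3) closed v moving]
    have "(pt ^^ n) v \<notin> forest_roots V pt"
      using agree[of n] agree[of "Suc n"] moving by (simp add: forest_roots_def)
    with False agree[of k] show ?thesis by (simp add: forest_power_def k)
  qed
qed

end
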